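(* Consider the lift $\varphi\colon\mathrm{S}^{n-1}\to\Delta^{n-1}$, $\varphi(y)=y\odot y$ (entrywise square). It satisfies "local $\Rightarrow$ local" at every point, satisfies "1 $\Rightarrow$ 1" at $y$ if and only if $y_i\neq0$ for all $i$, and satisfies "2 $\Rightarrow$ 1" at every point.
   Context: $\mathrm{S}^{n-1}$ is the unit sphere in $\mathbb{R}^n$ and $\Delta^{n-1}=\{x\in\mathbb{R}^n: x\ge0,\ \sum_i x_i=1\}$. General setting: for a smooth manifold $\mathcal{M}$ and smooth $\varphi\colon\mathcal{M}\to\mathcal{E}$ with image $\mathcal{X}$, and a cost $f$, set $g=f\circ\varphi$. Tangent cone: $\mathrm{T}_x\mathcal{X}=\{\lim (x_i-x)/\tau_i: x_i\in\mathcal{X},\tau_i>0,\tau_i\to0\}$; $K^*=\{u:\langle u,v\rangle\ge0\ \forall v\in K\}$; $x$ is stationary for $f$ on $\mathcal{X}$ if $\nabla f(x)\in(\mathrm{T}_x\mathcal{X})^*$. $y$ is 1-critical for $g$ if $(g\circ c)'(0)=0$ for all smooth curves $c$ in $\mathcal{M}$ with $c(0)=y$, and 2-critical if moreover $(g\circ c)''(0)\ge0$ for all such curves. "local $\Rightarrow$ local" at $y$: for every continuous $f\colon\mathcal{X}\to\mathbb{R}$, if $y$ is a local minimum of $g$ then $\varphi(y)$ is a local minimum of $f$ on $\mathcal{X}$. "$k\Rightarrow1$" at $y$ ($k=1,2$): for every $k$-times differentiable $f\colon\mathcal{E}\to\mathbb{R}$, if $y$ is $k$-critical for $g$ then $\varphi(y)$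 is stationary for $f$ on $\mathcal{X}$. *)

theory Defs
  imports "HOL-Analysis.Analysis"
begin

definition smooth_curve :: "(real \<Rightarrow> 'a::real_normed_vector) \<Rightarrow> bool" where
  "smooth_curve c \<longleftrightarrow>
     (\<exists>D :: nat \<Rightarrow> real \<Rightarrow> 'a. D 0 = c \<and> (\<forall>k t. (D k has_vector_derivative D (Suc k) t) (at t)))"

definition crit1 :: "'m::real_normed_vector set \<Rightarrow> ('m \<Rightarrow> real) \<Rightarrow> 'm \<Rightarrow> bool" where
  "crit1 M g y \<longleftrightarrow>
     (\<forall>c. smooth_curve c \<and> (\<forall>t. c t \<in> M) \<and> c 0 = y \<longrightarrow> deriv (g \<circ> c) 0 = 0)"

definition crit2 :: "'m::real_normed_vector set \<Rightarrow> ('m \<Rightarrow> real) \<Rightarrow> 'm \<Rightarrow> bool" where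
  "crit2 M g y \<longleftrightarrow> crit1 M g y \<and>
     (\<forall>c. smooth_curve c \<and> (\<forall>t. c t \<in> M) \<and> c 0 = y \<longrightarrow> deriv (deriv (g \<circ> c)) 0 \<ge> 0)"

definition local_min_on :: "'a::metric_space set \<Rightarrow> ('a \<Rightarrow> real) \<Rightarrow> 'a \<Rightarrow> bool" where
  "local_min_on S h x \<longleftrightarrow> x \<in> S \<and> (\<exists>e>0. \<forall>z\<in>S. dist z x < e \<longrightarrow> h x \<le> h z)"

definition tangent_cone :: "'a::real_normed_vector set \<Rightarrow> 'a \<Rightarrow> 'a set" where
  "tangent_cone X x = {v. \<exists>xs :: nat \<Rightarrow> 'a. \<exists>\<tau> :: nat \<Rightarrow> real.
      (\<forall>i. xs i \<in> X) \<and> (\<forall>i. \<tau> i > 0) \<and> \<tau> \<longlonglongrightarrow> 0 \<and>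
      (\<lambda>i. (xs i - x) /\<^sub>R \<tau> i) \<longlonglongrightarrow> v}"

definition dual_cone :: "'a::real_inner set \<Rightarrow> 'a set" where
  "dual_cone K = {u. \<forall>v\<in>K. inner u v \<ge> 0}"

definition stationary_on :: "'e::real_inner set \<Rightarrow> ('e \<Rightarrow> real) \<Rightarrow> 'e \<Rightarrow> bool" where
  "stationary_on X f x \<longleftrightarrow>
     (\<exists>gr. (f has_derivative (\<lambda>v. inner gr v)) (at x) \<and> gr \<in> dual_cone (tangent_cone X x))"

definition diff1 :: "('e::real_normed_vector \<Rightarrow> real) \<Rightarrow> bool" where
  "diff1 f \<longleftrightarrow> (\<forall>x. f differentiable (at x))"

definition diff2 :: "('e::real_normed_vector \<Rightarrow> real) \<Rightarrow> bool" where
  "diff2 f \<longleftrightarrow> (\<exists>Df :: 'e \<Rightarrow> ('e \<Rightarrow>\<^sub>L real).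
      (\<forall>x. (f has_derivative blinfun_apply (Df x)) (at x)) \<and> (\<forall>x. Df differentiable (at x)))"

definition local_local :: "'m::real_normed_vector set \<Rightarrow> ('m \<Rightarrow> 'e::real_inner) \<Rightarrow> 'm \<Rightarrow> bool" where
  "local_local M \<phi> y \<longleftrightarrow>
     (\<forall>f :: 'e \<Rightarrow> real. continuous_on (\<phi> ` M) f \<longrightarrow>
        local_min_on M (f \<circ> \<phi>) y \<longrightarrow> local_min_on (\<phi> ` M) f (\<phi> y))"

definition one_one :: "'m::real_normed_vector set \<Rightarrow> ('m \<Rightarrow> 'e::real_inner) \<Rightarrow> 'm \<Rightarrow> bool" where
  "one_one M \<phi> y \<longleftrightarrow>
     (\<forall>f :: 'e \<Rightarrow> real. diff1 f \<longrightarrow> crit1 M (f \<circ> \<phi>) y \<longrightarrow> stationary_on (\<phi> ` M) f (\<phi> y))"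

definition two_one :: "'m::real_normed_vector set \<Rightarrow> ('m \<Rightarrow> 'e::real_inner) \<Rightarrow> 'm \<Rightarrow> bool" where
  "two_one M \<phi> y \<longleftrightarrow>
     (\<forall>f :: 'e \<Rightarrow> real. diff2 f \<longrightarrow> crit2 M (f \<circ> \<phi>) y \<longrightarrow> stationary_on (\<phi> ` M) f (\<phi> y))"

definition std_simplex :: "(real ^ 'n) set" where
  "std_simplex = {x. (\<forall>i. x $ i \<ge> 0) \<and> (\<Sum>i\<in>UNIV. x $ i) = 1}"

definition sq_lift :: "real ^ 'n \<Rightarrow> real ^ 'n" where
  "sq_lift y = (\<chi> i. (y $ i) * (y $ i))"

end

theory Submission
  imports Defs
begin

(*
  The squaring map sends the unit sphere onto the simplex, and it has a local section around
  every y: the square root of z taken with the signs of y lies within distance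
  sqrt (n * dist z (sq_lift y)) of y.  This transfers local minima.

  Rotating y within the great circle through an orthogonal direction shows that at a
  1-critical point the gradient of f at x = sq_lift y is constant on the support of x.  This is
  stationarity on the simplex when y has no zero entry, since the tangent cone there consists
  of the zero-sum vectors.  At a zero entry y_j the lift is flat in the direction e_j - x,
  so f z = - z_j is 1-critical without being stationary.  Along the great circle from y to e_j,
  however, the lift traces x + (sin t)^2 (e_j - x), so the second derivative of f along it
  at 0 is 2 Df x (e_j - x), and 2-criticality supplies exactly the missing inequalities.
*)

lemma linear_functional_eq_inner:
  fixes L :: "'a::euclidean_space \<Rightarrow> real"
  assumes "linear L"
  shows "L = inner (adjoint L 1)"
proof
  fix x
  show "L x = inner (adjoint L 1) x"
    using adjoint_works[OF assms, of x 1] by (simp add: inner_commute)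
qed

lemma sqrt_diff_square_le:
  fixes a b :: real
  assumes "0 \<le> a" "0 \<le> b"
  shows "(sqrt a - sqrt b)\<^sup>2 \<le> \<bar>a - b\<bar>"
proof -
  have "(sqrt a - sqrt b)\<^sup>2 = \<bar>sqrt a - sqrt b\<bar> * \<bar>sqrt a - sqrt b\<bar>"
    by (simp add: power2_eq_square)
  also have "\<dots> \<le> \<bar>sqrt a - sqrt b\<bar> * (sqrt a + sqrt b)"
    using real_sqrt_ge_zero[OF assms(1)] real_sqrt_ge_zero[OF assms(2)]
    by (intro mult_left_mono) (auto simp: abs_le_iff)
  also have "\<dots> = \<bar>(sqrt a - sqrt b) * (sqrt a + sqrt b)\<bar>"
    using assms by (simp add: abs_mult)
  also have "\<dots> = \<bar>a - b\<bar>"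
    using assms by (simp add: algebra_simps)
  finally show ?thesis .
qed

lemma smooth_curve_cos_sin:
  fixes a b :: "'a::real_normed_vector"
  shows "smooth_curve (\<lambda>t. cos t *\<^sub>R a + sin t *\<^sub>R b)"
proof -
  define D where "D k t = cos (t + real k * pi/2) *\<^sub>R a + sin (t + real k * pi/2) *\<^sub>R b" for k t
  have "(D k has_vector_derivative D (Suc k) t) (at t)" for k t
  proof -
    have shift: "t + real (Suc k) * pi/2 = (t + real k * pi/2) + pi/2"
      by (simp add: field_simps)
    show ?thesis
      unfolding D_def shift cos_add sin_add by (auto intro!: derivative_eq_intros)
  qed
  moreover have "D 0 = (\<lambda>t. cos t *\<^sub>R a + sin t *\<^sub>R b)"
    by (simp add: D_def fun_eq_iff)
  ultimately show ?thesis
    unfolding smooth_curve_def by blast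
qed

lemma cos_sin_in_sphere:
  fixes y u :: "'a::real_inner"
  assumes "norm y = 1" "norm u = 1" "inner y u = 0"
  shows "cos t *\<^sub>R y + sin t *\<^sub>R u \<in> sphere 0 1"
proof -
  have "inner y y = 1" "inner u u = 1"
    using assms(1,2) by (simp_all add: norm_eq_1)
  then have "inner (cos t *\<^sub>R y + sin t *\<^sub>R u) (cos t *\<^sub>R y + sin t *\<^sub>R u)
      = (cos t)\<^sup>2 + (sin t)\<^sup>2"
    using assms(3) by (simp add: inner_add inner_commute power2_eq_square)
  then show ?thesis
    by (simp add: norm_eq_1)
qed

lemma deriv_comp_has_vector_derivative:
  fixes g :: "'a::real_normed_vector \<Rightarrow> real"
  assumes "(c has_vector_derivative v) (at t)" "(g has_derivative Dg) (at (c t))"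
  shows "deriv (g \<circ> c) t = Dg v"
proof -
  have "((g \<circ> c) has_derivative (\<lambda>h. Dg (h *\<^sub>R v))) (at t)"
    using diff_chain_at[OF assms(1)[unfolded has_vector_derivative_def] assms(2)]
    by (simp add: o_def)
  then have "((g \<circ> c) has_real_derivative Dg v) (at t)"
    unfolding has_field_derivative_def
    by (rule has_derivative_eq_rhs)
       (simp add: fun_eq_iff linear_cmul[OF has_derivative_linear[OF assms(2)]])
  then show ?thesis
    by (rule DERIV_imp_deriv)
qed

lemma crit1_if_has_derivative_zero:
  assumes "(g has_derivative (\<lambda>_. 0)) (at y)"
  shows "crit1 M g y"
  unfolding crit1_def
proof (intro allI impI)
  fix c :: "real \<Rightarrow> 'a"
  assume "smooth_curve c \<and> (\<forall>t. c t \<in> M) \<and> c 0 = y"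
  then obtain D where "D 0 = c" "\<And>k t. (D k has_vector_derivative D (Suc k) t) (at t)"
    and "c 0 = y"
    unfolding smooth_curve_def by blast
  then have "(c has_vector_derivative D 1 0) (at 0)"
    by (metis One_nat_def)
  then show "deriv (g \<circ> c) 0 = 0"
    using deriv_comp_has_vector_derivative assms \<open>c 0 = y\<close> by fastforce
qed

lemma crit1_sphere_derivative_tangent:
  fixes y w :: "'a::real_inner"
  assumes y: "y \<in> sphere 0 1" and crit: "crit1 (sphere 0 1) g y"
    and gd: "(g has_derivative Dg) (at y)" and orth: "inner y w = 0"
  shows "Dg w = 0"
proof (cases "w = 0")
  case True
  then show ?thesis
    using linear_0[OF has_derivative_linear[OF gd]] by simp
next
  case False
  define u where "u = w /\<^sub>R norm w"
  define c where "c = (\<lambda>t. cos t *\<^sub>R y + sin t *\<^sub>R u)"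
  have "norm u = 1" "inner y u = 0"
    using False orth by (simp_all add: u_def)
  then have "smooth_curve c" "\<forall>t. c t \<in> sphere 0 1" "c 0 = y"
    using y smooth_curve_cos_sin cos_sin_in_sphere by (auto simp: c_def)
  then have "deriv (g \<circ> c) 0 = 0"
    using crit unfolding crit1_def by blast
  moreover have "(c has_vector_derivative u) (at 0)"
    unfolding c_def by (auto intro!: derivative_eq_intros)
  ultimately have "Dg u = 0"
    using deriv_comp_has_vector_derivative gd \<open>c 0 = y\<close> by metis
  then show ?thesis
    using linear_cmul[OF has_derivative_linear[OF gd], of "norm w" u] False
    by (simp add: u_def)
qed

lemma second_deriv_along_sin_sq:
  fixes f :: "'a::real_normed_vector \<Rightarrow> real" and Df :: "'a \<Rightarrow> ('a \<Rightarrow>\<^sub>L real)"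
  assumes fD: "\<And>z. (f has_derivative blinfun_apply (Df z)) (at z)"
    and Dd: "Df differentiable (at x)"
  shows "deriv (deriv (\<lambda>t. f (x + (sin t)\<^sup>2 *\<^sub>R d))) 0 = 2 * Df x d"
proof -
  \<comment> \<open>(sin t)^2 vanishes to second order at 0, so the Hessian of f does not enter.\<close>
  define q where "q t = x + (sin t)\<^sup>2 *\<^sub>R d" for t
  define k where "k = (\<lambda>t. Df (q t) d)"
  have q_vd: "(q has_vector_derivative (2 * sin t * cos t) *\<^sub>R d) (at t)" for t
    unfolding q_def by (auto intro!: derivative_eq_intros)
  have "deriv (f \<circ> q) t = k t * (2 * sin t * cos t)" for t
    using deriv_comp_has_vector_derivative[OF q_vd fD] by (simp add: k_def blinfun.scaleR_right)
  then have deriv_eq: "deriv (\<lambda>t. f (q t)) = (\<lambda>t. k t * (2 * sin t * cos t))"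
    by (simp add: fun_eq_iff o_def)
  have "(Df \<circ> q) differentiable (at 0)"
    using differentiableI_vector[OF q_vd[of 0]] Dd
    by (intro differentiable_chain_at) (simp_all add: q_def)
  then have "((\<lambda>L. blinfun_apply L d) \<circ> (Df \<circ> q)) differentiable (at 0)"
    by (rule differentiable_chain_at[OF _ bounded_linear_imp_differentiable])
      (rule blinfun.bounded_linear_left)
  then have "k differentiable (at 0)"
    by (simp add: k_def o_def)
  then have "(k has_real_derivative deriv k 0) (at 0)"
    by (simp add: DERIV_deriv_iff_real_differentiable)
  then have "((\<lambda>t. k t * (2 * sin t * cos t)) has_real_derivative 2 * k 0) (at 0)"
    by (auto intro!: derivative_eq_intros)
  then show ?thesis
    using deriv_eq by (simp add: DERIV_imp_deriv q_def k_def)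
qed

lemma convex_diff_in_tangent_cone:
  fixes x z :: "'a::real_normed_vector"
  assumes "convex S" "x \<in> S" "z \<in> S"
  shows "z - x \<in> tangent_cone S x"
proof -
  define \<tau> where "\<tau> k = inverse (real (Suc k))" for k
  define xs where "xs k = x + \<tau> k *\<^sub>R (z - x)" for k
  have \<tau>: "\<tau> k > 0" "\<tau> k \<le> 1" for k
    by (simp_all add: \<tau>_def inverse_le_1_iff)
  then have "(1 - \<tau> k) *\<^sub>R x + \<tau> k *\<^sub>R z \<in> S" for k
    using convexD_alt[OF assms] less_imp_le by blast
  then have "xs k \<in> S" for k
    by (simp add: xs_def algebra_simps)
  moreover have "\<tau> \<longlonglongrightarrow> 0"
    unfolding \<tau>_def by (rule LIMSEQ_inverse_real_of_nat)
  moreover have "(\<lambda>k. (xs k - x) /\<^sub>R \<tau> k) = (\<lambda>k. z - x)"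
    using \<tau>(1) by (simp add: xs_def fun_eq_iff less_imp_neq[symmetric])
  ultimately show ?thesis
    unfolding tangent_cone_def using \<tau> by (intro CollectI exI[of _ xs] exI[of _ \<tau>]) simp
qed

lemma tangent_cone_linear_nonneg:
  fixes L :: "'a::real_normed_vector \<Rightarrow> real"
  assumes L: "bounded_linear L" and min: "\<And>z. z \<in> X \<Longrightarrow> L x \<le> L z"
    and v: "v \<in> tangent_cone X x"
  shows "L v \<ge> 0"
proof -
  obtain xs \<tau> where xs: "\<And>i. xs i \<in> X" and \<tau>: "\<And>i. \<tau> i > 0"
    and lim: "(\<lambda>i. (xs i - x) /\<^sub>R \<tau> i) \<longlonglongrightarrow> v"
    using v unfolding tangent_cone_def by blast
  have "(\<lambda>i. L ((xs i - x) /\<^sub>R \<tau> i)) \<longlonglongrightarrow> L v"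
    using bounded_linear.tendsto[OF L lim] .
  moreover have "L ((xs i - x) /\<^sub>R \<tau> i) = (L (xs i) - L x) / \<tau> i" for i
    using linear_diff[OF bounded_linear.linear[OF L]] linear_scale[OF bounded_linear.linear[OF L]]
    by (simp add: divide_inverse_commute)
  ultimately show ?thesis
    using xs \<tau> min by (intro LIMSEQ_le_const) (auto intro!: divide_nonneg_pos)
qed

lemma convex_std_simplex: "convex std_simplex"
proof (rule convexI)
  fix x z :: "real^'n" and u v :: real
  assume "x \<in> std_simplex" "z \<in> std_simplex" "0 \<le> u" "0 \<le> v" "u + v = 1"
  moreover have "(\<Sum>i\<in>UNIV. u * x $ i + v * z $ i)
      = u * (\<Sum>i\<in>UNIV. x $ i) + v * (\<Sum>i\<in>UNIV. z $ i)"
    by (simp add: sum.distrib sum_distrib_left)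
  ultimately show "u *\<^sub>R x + v *\<^sub>R z \<in> std_simplex"
    unfolding std_simplex_def by simp
qed

lemma axis_in_std_simplex: "axis j 1 \<in> std_simplex"
  by (simp add: std_simplex_def axis_def)

lemma tangent_cone_std_simplex:
  fixes x v :: "real^'n"
  assumes x: "x \<in> std_simplex" and v: "v \<in> tangent_cone std_simplex x"
  shows "(\<Sum>i\<in>UNIV. v $ i) = 0" and "x $ j = 0 \<Longrightarrow> 0 \<le> v $ j"
proof -
  have sum: "bounded_linear (\<lambda>z::real^'n. \<Sum>i\<in>UNIV. z $ i)"
    by (intro bounded_linear_sum bounded_linear_vec_nth)
  have "0 \<le> (\<Sum>i\<in>UNIV. v $ i)"
    using x by (intro tangent_cone_linear_nonneg[OF sum _ v]) (simp add: std_simplex_def)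
  moreover have "0 \<le> - (\<Sum>i\<in>UNIV. v $ i)"
    using x by (intro tangent_cone_linear_nonneg[OF bounded_linear_minus[OF sum] _ v])
      (simp add: std_simplex_def)
  ultimately show "(\<Sum>i\<in>UNIV. v $ i) = 0"
    by linarith
  show "0 \<le> v $ j" if "x $ j = 0"
    using x that by (intro tangent_cone_linear_nonneg[OF bounded_linear_vec_nth _ v])
      (simp add: std_simplex_def)
qed

lemma std_simplex_dual_tangent_coneI:
  fixes x gr :: "real^'n"
  assumes x: "x \<in> std_simplex"
    and eq: "\<And>i. x $ i \<noteq> 0 \<Longrightarrow> gr $ i = l"
    and ge: "\<And>i. x $ i = 0 \<Longrightarrow> l \<le> gr $ i"
  shows "gr \<in> dual_cone (tangent_cone std_simplex x)"
  unfolding dual_cone_def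
proof (intro CollectI ballI)
  fix v
  assume v: "v \<in> tangent_cone std_simplex x"
  have "l * v $ i \<le> gr $ i * v $ i" for i
    using eq ge tangent_cone_std_simplex(2)[OF x v] by (cases "x $ i = 0") (auto intro: mult_right_mono)
  then have "(\<Sum>i\<in>UNIV. l * v $ i) \<le> inner gr v"
    unfolding inner_vec_def inner_real_def by (rule sum_mono)
  then show "0 \<le> inner gr v"
    using tangent_cone_std_simplex(1)[OF x v] by (simp flip: sum_distrib_left)
qed

lemma sq_lift_sphere: "sq_lift ` sphere 0 1 = std_simplex"
proof
  show "sq_lift ` sphere 0 1 \<subseteq> std_simplex"
    by (auto simp: std_simplex_def sq_lift_def norm_eq_1 inner_vec_def)
  show "std_simplex \<subseteq> sq_lift ` sphere 0 1"
  proof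
    fix x :: "real^'n"
    assume x: "x \<in> std_simplex"
    then have "sq_lift (\<chi> i. sqrt (x $ i)) = x" "(\<chi> i. sqrt (x $ i)) \<in> sphere 0 1"
      by (simp_all add: std_simplex_def sq_lift_def vec_eq_iff norm_eq_1 inner_vec_def)
    then show "x \<in> sq_lift ` sphere 0 1"
      by (metis image_eqI)
  qed
qed

lemma sq_lift_has_derivative:
  fixes y :: "real^'n"
  shows "(sq_lift has_derivative (\<lambda>h. 2 *\<^sub>R (\<chi> i. y $ i * h $ i))) (at y)"
proof (rule has_derivative_componentwise_within[THEN iffD2, rule_format])
  fix b :: "real^'n"
  assume "b \<in> Basis"
  then obtain i where "b = axis i 1"
    by (auto simp: Basis_vec_def)
  have "((\<lambda>z. z $ i) has_derivative (\<lambda>h. h $ i)) (at y)"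
    by (rule bounded_linear_imp_has_derivative[OF bounded_linear_vec_nth])
  from this this have "((\<lambda>z. z $ i * z $ i) has_derivative (\<lambda>h. 2 * (y $ i * h $ i))) (at y)"
    by (rule has_derivative_eq_rhs[OF has_derivative_mult]) (auto simp: fun_eq_iff)
  then show "((\<lambda>z. sq_lift z \<bullet> b) has_derivative
      (\<lambda>h. 2 *\<^sub>R (\<chi> i. y $ i * h $ i) \<bullet> b)) (at y)"
    by (simp add: \<open>b = axis i 1\<close> inner_axis sq_lift_def)
qed

lemma sq_lift_local_preimage:
  fixes y z :: "real^'n"
  assumes y: "y \<in> sphere 0 1" and z: "z \<in> std_simplex"
  obtains w where "w \<in> sphere 0 1" "sq_lift w = z"
    "(dist w y)\<^sup>2 \<le> CARD('n) * dist z (sq_lift y)"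
proof
  define w where "w = (\<chi> i. if 0 \<le> y $ i then sqrt (z $ i) else - sqrt (z $ i))"
  have z_nonneg: "0 \<le> z $ i" for i
    using z by (simp add: std_simplex_def)
  show "sq_lift w = z"
    using z_nonneg by (simp add: w_def sq_lift_def vec_eq_iff)
  have "inner w w = (\<Sum>i\<in>UNIV. z $ i)"
    unfolding inner_vec_def inner_real_def by (intro sum.cong) (auto simp: w_def z_nonneg)
  then show "w \<in> sphere 0 1"
    using z by (simp add: std_simplex_def norm_eq_1)
  have "((w - y) $ i)\<^sup>2 \<le> dist z (sq_lift y)" for i
  proof -
    have "((w - y) $ i)\<^sup>2 = (sqrt (z $ i) - sqrt (y $ i * y $ i))\<^sup>2"
      by (cases "0 \<le> y $ i") (auto simp: w_def real_sqrt_mult_self power2_eq_square algebra_simps)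
    also have "\<dots> \<le> \<bar>z $ i - y $ i * y $ i\<bar>"
      by (rule sqrt_diff_square_le[OF z_nonneg]) simp
    also have "\<dots> = \<bar>(z - sq_lift y) $ i\<bar>"
      by (simp add: sq_lift_def)
    also have "\<dots> \<le> dist z (sq_lift y)"
      unfolding dist_norm by (rule component_le_norm_cart)
    finally show ?thesis .
  qed
  then have "(\<Sum>i\<in>UNIV. ((w - y) $ i)\<^sup>2) \<le> CARD('n) * dist z (sq_lift y)"
    using sum_mono[of UNIV "\<lambda>i. ((w - y) $ i)\<^sup>2" "\<lambda>_. dist z (sq_lift y)"] by simp
  moreover have "(dist w y)\<^sup>2 = (\<Sum>i\<in>UNIV. ((w - y) $ i)\<^sup>2)"
    unfolding dist_norm power2_norm_eq_inner by (simp add: inner_vec_def power2_eq_square)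
  ultimately show "(dist w y)\<^sup>2 \<le> CARD('n) * dist z (sq_lift y)"
    by simp
qed

lemma local_local_sq_lift:
  fixes y :: "real^'n"
  assumes y: "y \<in> sphere 0 1"
  shows "local_local (sphere 0 1) sq_lift y"
  unfolding local_local_def sq_lift_sphere
proof (intro allI impI)
  fix f :: "real^'n \<Rightarrow> real"
  assume "local_min_on (sphere 0 1) (f \<circ> sq_lift) y"
  then obtain e where "e > 0"
    and min: "\<And>w. w \<in> sphere 0 1 \<Longrightarrow> dist w y < e \<Longrightarrow> f (sq_lift y) \<le> f (sq_lift w)"
    unfolding local_min_on_def by auto
  define d where "d = e\<^sup>2 / CARD('n)"
  have "f (sq_lift y) \<le> f z" if z: "z \<in> std_simplex" "dist z (sq_lift y) < d" for z
  proof -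
    obtain w where w: "w \<in> sphere 0 1" "sq_lift w = z"
      and close: "(dist w y)\<^sup>2 \<le> CARD('n) * dist z (sq_lift y)"
      using sq_lift_local_preimage[OF y z(1)] .
    have "CARD('n) * dist z (sq_lift y) < e\<^sup>2"
      using z(2) by (simp add: d_def field_simps)
    with close have "(dist w y)\<^sup>2 < e\<^sup>2"
      by linarith
    then have "dist w y < e"
      using \<open>e > 0\<close> by (simp add: power_less_imp_less_base)
    then show ?thesis
      using min w by blast
  qed
  moreover have "d > 0"
    using \<open>e > 0\<close> by (simp add: d_def)
  moreover have "sq_lift y \<in> std_simplex"
    using y sq_lift_sphere by blast
  ultimately show "local_min_on std_simplex f (sq_lift y)"
    unfolding local_min_on_def by blast
qed

lemma crit1_sq_lift_gradient_eq:
  fixes y gr :: "real^'n"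
  assumes y: "y \<in> sphere 0 1" and crit: "crit1 (sphere 0 1) (f \<circ> sq_lift) y"
    and fd: "(f has_derivative inner gr) (at (sq_lift y))"
    and "y $ i \<noteq> 0" "y $ k \<noteq> 0"
  shows "gr $ i = gr $ k"
proof -
  define w where "w = axis i (y $ k) - axis k (y $ i)"
  have "(f \<circ> sq_lift has_derivative (\<lambda>h. inner gr (2 *\<^sub>R (\<chi> j. y $ j * h $ j)))) (at y)"
    using diff_chain_at[OF sq_lift_has_derivative fd] by (simp add: o_def)
  moreover have "inner y w = 0"
    by (simp add: w_def inner_diff_right inner_axis mult.commute)
  ultimately have "inner gr (2 *\<^sub>R (\<chi> j. y $ j * w $ j)) = 0"
    using crit1_sphere_derivative_tangent[OF y crit] by blast
  moreover have "(\<chi> j. y $ j * w $ j) = (y $ i * y $ k) *\<^sub>R (axis i 1 - axis k 1)"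
    by (auto simp: w_def vec_eq_iff axis_def)
  ultimately show ?thesis
    using assms(4,5) by (simp add: inner_diff_right inner_axis)
qed

lemma stationary_sq_lift_if_crit1:
  fixes y gr :: "real^'n"
  assumes y: "y \<in> sphere 0 1" and crit: "crit1 (sphere 0 1) (f \<circ> sq_lift) y"
    and fd: "(f has_derivative inner gr) (at (sq_lift y))"
    and zero_coord: "\<And>j. y $ j = 0 \<Longrightarrow> 0 \<le> inner gr (axis j 1 - sq_lift y)"
  shows "stationary_on (sq_lift ` sphere 0 1) f (sq_lift y)"
proof -
  have "y \<noteq> 0"
    using y by auto
  then obtain k where k: "y $ k \<noteq> 0"
    by (auto simp: vec_eq_iff)
  have x: "sq_lift y \<in> std_simplex"
    using y sq_lift_sphere by blast
  have x_zero_iff: "sq_lift y $ i = 0 \<longleftrightarrow> y $ i = 0" for i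
    by (simp add: sq_lift_def)
  have eq: "gr $ i = gr $ k" if "sq_lift y $ i \<noteq> 0" for i
    using crit1_sq_lift_gradient_eq[OF y crit fd _ k] that x_zero_iff by blast
  have "inner gr (sq_lift y) = (\<Sum>i\<in>UNIV. gr $ k * sq_lift y $ i)"
    unfolding inner_vec_def inner_real_def using eq by (intro sum.cong) auto
  also have "\<dots> = gr $ k"
    using x by (simp add: std_simplex_def flip: sum_distrib_left)
  finally have ge: "gr $ k \<le> gr $ j" if "sq_lift y $ j = 0" for j
    using zero_coord[of j] that x_zero_iff by (simp add: inner_diff_right inner_axis)
  show ?thesis
    unfolding stationary_on_def sq_lift_sphere
    using fd std_simplex_dual_tangent_coneI[OF x eq ge] by blast
qed

lemma one_one_sq_lift_if_nonzero:
  fixes y :: "real^'n"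
  assumes y: "y \<in> sphere 0 1" and nonzero: "\<forall>i. y $ i \<noteq> 0"
  shows "one_one (sphere 0 1) sq_lift y"
  unfolding one_one_def
proof (intro allI impI)
  fix f :: "real^'n \<Rightarrow> real"
  assume "diff1 f" and crit: "crit1 (sphere 0 1) (f \<circ> sq_lift) y"
  then obtain D where fD: "(f has_derivative D) (at (sq_lift y))"
    unfolding diff1_def differentiable_def by blast
  then have "D = inner (adjoint D 1)"
    by (intro linear_functional_eq_inner has_derivative_linear)
  with fD show "stationary_on (sq_lift ` sphere 0 1) f (sq_lift y)"
    using stationary_sq_lift_if_crit1[OF y crit] nonzero by metis
qed

lemma nonzero_if_one_one_sq_lift:
  fixes y :: "real^'n"
  assumes y: "y \<in> sphere 0 1" and one_one: "one_one (sphere 0 1) sq_lift y"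
  shows "y $ j \<noteq> 0"
proof
  assume yj: "y $ j = 0"
  \<comment> \<open>f decreases towards the vertex e_j, but f \<circ> sq_lift is flat at y since y_j = 0.\<close>
  define f where "f z = - z $ j" for z :: "real^'n"
  have fD: "(f has_derivative f) (at z)" for z
    unfolding f_def by (intro bounded_linear_imp_has_derivative bounded_linear_minus bounded_linear_vec_nth)
  then have "diff1 f"
    unfolding diff1_def differentiable_def by blast
  moreover have "(f \<circ> sq_lift has_derivative (\<lambda>_. 0)) (at y)"
    using diff_chain_at[OF sq_lift_has_derivative[of y] fD[of "sq_lift y"]] yj
    by (simp add: f_def o_def)
  then have "crit1 (sphere 0 1) (f \<circ> sq_lift) y"
    by (rule crit1_if_has_derivative_zero)
  ultimately obtain gr where fd: "(f has_derivative inner gr) (at (sq_lift y))"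
    and dual: "gr \<in> dual_cone (tangent_cone std_simplex (sq_lift y))"
    using one_one unfolding one_one_def stationary_on_def sq_lift_sphere by blast
  have "axis j 1 - sq_lift y \<in> tangent_cone std_simplex (sq_lift y)"
    using y sq_lift_sphere axis_in_std_simplex
    by (intro convex_diff_in_tangent_cone[OF convex_std_simplex]) auto
  then have "0 \<le> inner gr (axis j 1 - sq_lift y)"
    using dual unfolding dual_cone_def by blast
  also have "inner gr (axis j 1 - sq_lift y) = f (axis j 1 - sq_lift y)"
    using has_derivative_unique[OF fD fd] by simp
  also have "\<dots> = -1"
    using yj by (simp add: f_def sq_lift_def)
  finally show False
    by simp
qed

lemma sq_lift_cos_sin_axis:
  fixes y :: "real^'n"
  assumes "y $ j = 0"
  shows "sq_lift (cos t *\<^sub>R y + sin t *\<^sub>R axis j 1)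
    = sq_lift y + (sin t)\<^sup>2 *\<^sub>R (axis j 1 - sq_lift y)"
proof -
  have cos_sq: "cos t * cos t = 1 - sin t * sin t"
    using sin_cos_squared_add3[of t] by linarith
  have "(cos t * a) * (cos t * a) = a * a - sin t * sin t * (a * a)" for a
  proof -
    have "(cos t * a) * (cos t * a) = (cos t * cos t) * (a * a)"
      by (simp only: mult_ac)
    then show ?thesis
      by (simp add: cos_sq algebra_simps)
  qed
  with assms show ?thesis
    by (auto simp: vec_eq_iff sq_lift_def axis_def power2_eq_square)
qed

lemma crit2_sq_lift_zero_coord:
  fixes y :: "real^'n" and Df :: "(real^'n) \<Rightarrow> ((real^'n) \<Rightarrow>\<^sub>L real)"
  assumes y: "y \<in> sphere 0 1" and yj: "y $ j = 0"
    and fD: "\<And>z. (f has_derivative Df z) (at z)" and Dd: "Df differentiable (at (sq_lift y))"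
    and crit: "crit2 (sphere 0 1) (f \<circ> sq_lift) y"
  shows "0 \<le> Df (sq_lift y) (axis j 1 - sq_lift y)"
proof -
  define c where "c = (\<lambda>t. cos t *\<^sub>R y + sin t *\<^sub>R (axis j 1 :: real^'n))"
  have "norm (axis j 1 :: real^'n) = 1" "inner y (axis j 1) = 0"
    using yj by (simp_all add: inner_axis)
  then have "\<forall>t. c t \<in> sphere 0 1"
    using y cos_sin_in_sphere[of y "axis j 1"] by (simp add: c_def)
  moreover have "smooth_curve c" "c 0 = y"
    unfolding c_def by (simp_all add: smooth_curve_cos_sin)
  ultimately have "0 \<le> deriv (deriv (f \<circ> sq_lift \<circ> c)) 0"
    using crit unfolding crit2_def by blast
  also have "f \<circ> sq_lift \<circ> c = (\<lambda>t. f (sq_lift y + (sin t)\<^sup>2 *\<^sub>R (axis j 1 - sq_lift y)))"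
    using sq_lift_cos_sin_axis[OF yj] by (simp add: c_def fun_eq_iff)
  also have "deriv (deriv \<dots>) 0 = 2 * Df (sq_lift y) (axis j 1 - sq_lift y)"
    by (rule second_deriv_along_sin_sq[OF fD Dd])
  finally show ?thesis
    by simp
qed

lemma two_one_sq_lift:
  fixes y :: "real^'n"
  assumes y: "y \<in> sphere 0 1"
  shows "two_one (sphere 0 1) sq_lift y"
  unfolding two_one_def
proof (intro allI impI)
  fix f :: "real^'n \<Rightarrow> real"
  assume "diff2 f" and crit: "crit2 (sphere 0 1) (f \<circ> sq_lift) y"
  then obtain Df :: "(real^'n) \<Rightarrow> ((real^'n) \<Rightarrow>\<^sub>L real)"
    where fD: "\<And>z. (f has_derivative Df z) (at z)" and Dd: "\<And>z. Df differentiable (at z)"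
    unfolding diff2_def by blast
  define gr where "gr = adjoint (Df (sq_lift y)) 1"
  have Dgr: "blinfun_apply (Df (sq_lift y)) = inner gr"
    unfolding gr_def by (intro linear_functional_eq_inner bounded_linear.linear blinfun.bounded_linear_right)
  show "stationary_on (sq_lift ` sphere 0 1) f (sq_lift y)"
  proof (rule stationary_sq_lift_if_crit1[OF y])
    show "crit1 (sphere 0 1) (f \<circ> sq_lift) y"
      using crit unfolding crit2_def by blast
    show "(f has_derivative inner gr) (at (sq_lift y))"
      using fD[of "sq_lift y"] by (simp add: Dgr)
    show "0 \<le> inner gr (axis j 1 - sq_lift y)" if "y $ j = 0" for j
      using crit2_sq_lift_zero_coord[OF y that fD Dd crit] by (simp add: Dgr)
  qed
qed

theorem proposition2p5:
  fixes y :: "real ^ 'n"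
  assumes "y \<in> sphere 0 1"
  shows "sq_lift ` (sphere 0 1 :: (real ^ 'n) set) = std_simplex
     \<and> local_local (sphere 0 1) sq_lift y
     \<and> (one_one (sphere 0 1) sq_lift y \<longleftrightarrow> (\<forall>i. y $ i \<noteq> 0))
     \<and> two_one (sphere 0 1) sq_lift y"
  using sq_lift_sphere local_local_sq_lift[OF assms] one_one_sq_lift_if_nonzero[OF assms]
    nonzero_if_one_one_sq_lift[OF assms] two_one_sq_lift[OF assms]
  by blast

end
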